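(* Let $S$ be a pogroup and $B$ a poset. If $f:X\to B$ is a monotone map which is topological as a functor (posets regarded as categories), then $f$, regarded as an $S$-poset map with trivial action on both $X$ and $B$, is a regular injective object of $\mathbf{Pos}\text{-}S/B$.
   Context: A pogroup is a group with a partial order compatible with multiplication (a pomonoid that is a group). $\mathbf{Pos}\text{-}S$ is the category of right $S$-posets and action-preserving monotone maps; $\mathbf{Pos}\text{-}S/B$ its slice over $B$; trivial action means $as=a$ for all $a,s$. Regular injective means injective with respect to order-embeddings. A poset is a category with an arrow $a\to a'$ iff $a\le a'$. For a functor $G:\mathcal A\to\mathcal X$, a source $(f_i:A\to A_i)_{i\in I}$ is $G$-initial if for every source $(g_i:C\to A_i)$ and $\mathcal X$-morphism $h:GC\to GA$ with $Gg_i=Gf_i h$ for all $i$ there is a unique $\bar h:C\to A$ with $G\bar h=h$ and $g_i=f_i\bar h$; $G$ is topological if every $G$-structured source $(X\to GA_i)_{i\in I}$ has a unique $G$-initial lift (a source $(A\to A_i)$ with $GA=X$ mapped by $G$ to the given source). *)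

theory Defs
  imports "HOL-Algebra.Group"
begin

definition poset :: "'a set \<Rightarrow> ('a \<Rightarrow> 'a \<Rightarrow> bool) \<Rightarrow> bool" where
  "poset P r \<longleftrightarrow> (\<forall>x\<in>P. r x x)
     \<and> (\<forall>x\<in>P. \<forall>y\<in>P. r x y \<and> r y x \<longrightarrow> x = y)
     \<and> (\<forall>x\<in>P. \<forall>y\<in>P. \<forall>z\<in>P. r x y \<and> r y z \<longrightarrow> r x z)"

definition pogroup :: "('s, 'm) monoid_scheme \<Rightarrow> ('s \<Rightarrow> 's \<Rightarrow> bool) \<Rightarrow> bool" where
  "pogroup S r \<longleftrightarrow> group S \<and> poset (carrier S) r
     \<and> (\<forall>s\<in>carrier S. \<forall>t\<in>carrier S. \<forall>u\<in>carrier S.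
          r s t \<longrightarrow> r (s \<otimes>\<^bsub>S\<^esub> u) (t \<otimes>\<^bsub>S\<^esub> u) \<and> r (u \<otimes>\<^bsub>S\<^esub> s) (u \<otimes>\<^bsub>S\<^esub> t))"

definition monotone_map ::
  "'a set \<Rightarrow> ('a \<Rightarrow> 'a \<Rightarrow> bool) \<Rightarrow> 'b set \<Rightarrow> ('b \<Rightarrow> 'b \<Rightarrow> bool) \<Rightarrow> ('a \<Rightarrow> 'b) \<Rightarrow> bool" where
  "monotone_map A leA B leB f \<longleftrightarrow> (\<forall>x\<in>A. f x \<in> B) \<and> (\<forall>x\<in>A. \<forall>y\<in>A. leA x y \<longrightarrow> leB (f x) (f y))"

definition S_poset ::
  "('s, 'm) monoid_scheme \<Rightarrow> ('s \<Rightarrow> 's \<Rightarrow> bool) \<Rightarrow> 'a set \<Rightarrow> ('a \<Rightarrow> 'a \<Rightarrow> bool) \<Rightarrow> ('a \<Rightarrow> 's \<Rightarrow> 'a) \<Rightarrow> bool" where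
  "S_poset S leS A leA act \<longleftrightarrow> poset A leA
     \<and> (\<forall>a\<in>A. \<forall>s\<in>carrier S. act a s \<in> A)
     \<and> (\<forall>a\<in>A. act a \<one>\<^bsub>S\<^esub> = a)
     \<and> (\<forall>a\<in>A. \<forall>s\<in>carrier S. \<forall>t\<in>carrier S. act a (s \<otimes>\<^bsub>S\<^esub> t) = act (act a s) t)
     \<and> (\<forall>a\<in>A. \<forall>b\<in>A. \<forall>s\<in>carrier S. \<forall>t\<in>carrier S.
          leA a b \<and> leS s t \<longrightarrow> leA (act a s) (act b t))"

definition S_poset_map ::
  "('s, 'm) monoid_scheme \<Rightarrow> 'a set \<Rightarrow> ('a \<Rightarrow> 'a \<Rightarrow> bool) \<Rightarrow> ('a \<Rightarrow> 's \<Rightarrow> 'a)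
   \<Rightarrow> 'c set \<Rightarrow> ('c \<Rightarrow> 'c \<Rightarrow> bool) \<Rightarrow> ('c \<Rightarrow> 's \<Rightarrow> 'c) \<Rightarrow> ('a \<Rightarrow> 'c) \<Rightarrow> bool" where
  "S_poset_map S A leA actA C leC actC h \<longleftrightarrow> monotone_map A leA C leC h
     \<and> (\<forall>a\<in>A. \<forall>s\<in>carrier S. h (actA a s) = actC (h a) s)"

definition order_embedding ::
  "'a set \<Rightarrow> ('a \<Rightarrow> 'a \<Rightarrow> bool) \<Rightarrow> 'c set \<Rightarrow> ('c \<Rightarrow> 'c \<Rightarrow> bool) \<Rightarrow> ('a \<Rightarrow> 'c) \<Rightarrow> bool" where
  "order_embedding A leA C leC h \<longleftrightarrow> (\<forall>a\<in>A. h a \<in> C)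
     \<and> (\<forall>a\<in>A. \<forall>b\<in>A. leC (h a) (h b) \<longleftrightarrow> leA a b)"

definition trivial_action :: "'a \<Rightarrow> 's \<Rightarrow> 'a" where
  "trivial_action a s = a"

text \<open>Posets as categories: an arrow a \<rightarrow> a' exists (uniquely) iff a <= a'.
  For the functor f : X \<rightarrow> B, a source (a \<rightarrow> Ai i) (i \<in> I) is f-initial iff for every
  source (c \<rightarrow> Ai i) and every arrow f c \<rightarrow> f a there is a (necessarily unique) arrow
  c \<rightarrow> a; the compatibility equations hold automatically in a poset.\<close>
definition initial_source ::
  "'x set \<Rightarrow> ('x \<Rightarrow> 'x \<Rightarrow> bool) \<Rightarrow> ('b \<Rightarrow> 'b \<Rightarrow> bool) \<Rightarrow> ('x \<Rightarrow> 'b)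
   \<Rightarrow> 'i set \<Rightarrow> ('i \<Rightarrow> 'x) \<Rightarrow> 'x \<Rightarrow> bool" where
  "initial_source X leX leB f I Ai a \<longleftrightarrow>
     (\<forall>c\<in>X. (\<forall>i\<in>I. leX c (Ai i)) \<and> leB (f c) (f a) \<longrightarrow> leX c a)"

text \<open>Sources are indexed by subsets of X
  (in a poset a source is determined by its set of codomains).\<close>
definition topological_functor ::
  "'x set \<Rightarrow> ('x \<Rightarrow> 'x \<Rightarrow> bool) \<Rightarrow> 'b set \<Rightarrow> ('b \<Rightarrow> 'b \<Rightarrow> bool) \<Rightarrow> ('x \<Rightarrow> 'b) \<Rightarrow> bool" where
  "topological_functor X leX B leB f \<longleftrightarrow> monotone_map X leX B leB f
     \<and> (\<forall>(I :: 'x set) (Ai :: 'x \<Rightarrow> 'x) x.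
          x \<in> B \<and> Ai ` I \<subseteq> X \<and> (\<forall>i\<in>I. leB x (f (Ai i))) \<longrightarrow>
          (\<exists>!a. a \<in> X \<and> f a = x \<and> (\<forall>i\<in>I. leX a (Ai i))
                 \<and> initial_source X leX leB f I Ai a))"

end

theory Submission
  imports Defs
begin

(* Let A \<le> C be an order-embedding of S-posets (via h), with maps
   g : A \<rightarrow> B, k : C \<rightarrow> B, u : A \<rightarrow> X over B, where B and X carry the trivial action.
   For c \<in> C collect the "upper image" D c = {u a | a \<in> A, c \<le> h a} \<subseteq> X.  Since
   k c \<le> k (h a) = f (u a), the f-structured source (k c \<rightarrow> f d)_{d \<in> D c} has a unique
   initial lift v c, and v is the required extension:
   - v is monotone, because initial lifts are monotone in the data (smaller source,
     larger base point);
   - v is action-invariant: h is equivariant and u orbit-constant, so D c \<subseteq> D (c s);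
     as S is a group, also D (c s) \<subseteq> D (c s s^-1) = D c, and k (c s) = k c;
   - v (h a) = u a, because u a is the least element of D (h a), and a least element
     is always an initial lift, which is unique. *)

definition initial_lift ::
  "'x set \<Rightarrow> ('x \<Rightarrow> 'x \<Rightarrow> bool) \<Rightarrow> ('b \<Rightarrow> 'b \<Rightarrow> bool) \<Rightarrow> ('x \<Rightarrow> 'b) \<Rightarrow> 'x set \<Rightarrow> 'b \<Rightarrow> 'x \<Rightarrow> bool"
  where "initial_lift X leX leB f D y a \<longleftrightarrow> a \<in> X \<and> f a = y \<and> (\<forall>d\<in>D. leX a d)
           \<and> initial_source X leX leB f D id a"

lemma topological_unique_initial_lift:
  fixes X :: "'x set" and f :: "'x \<Rightarrow> 'b"
  assumes "topological_functor X leX B leB f"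
    and "y \<in> B" and "D \<subseteq> X" and "\<forall>d\<in>D. leB y (f d)"
  shows "\<exists>!a. initial_lift X leX leB f D y a"
proof -
  have "\<forall>(I :: 'x set) Ai x. x \<in> B \<and> Ai ` I \<subseteq> X \<and> (\<forall>i\<in>I. leB x (f (Ai i))) \<longrightarrow>
          (\<exists>!a. a \<in> X \<and> f a = x \<and> (\<forall>i\<in>I. leX a (Ai i)) \<and> initial_source X leX leB f I Ai a)"
    using assms(1) unfolding topological_functor_def by (rule conjunct2)
  from this[rule_format, where I=D and Ai=id and x=y] show ?thesis
    using assms(2-4) unfolding initial_lift_def by simp
qed

lemma initial_lift_mono:
  assumes "initial_lift X leX leB f D y a" and "initial_lift X leX leB f D' y' a'"
    and "D' \<subseteq> D" and "leB y y'"
  shows "leX a a'"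
proof -
  have "a \<in> X" and "\<forall>d\<in>D'. leX a d" and "leB (f a) (f a')"
    using assms unfolding initial_lift_def by auto
  moreover have "initial_source X leX leB f D' id a'"
    using assms(2) unfolding initial_lift_def by blast
  ultimately show ?thesis unfolding initial_source_def by simp
qed

lemma least_element_initial_lift:
  assumes "a \<in> D" and "D \<subseteq> X" and "\<forall>d\<in>D. leX a d" and "f a = y"
  shows "initial_lift X leX leB f D y a"
  using assms unfolding initial_lift_def initial_source_def by (simp add: subset_eq)

lemma poset_trivial_S_poset:
  assumes "poset P leP"
  shows "S_poset S leS P leP trivial_action"
  using assms unfolding S_poset_def trivial_action_def by simp

lemma S_poset_map_trivial_iff:
  "S_poset_map S A leA actA B leB trivial_action g \<longleftrightarrow>
     monotone_map A leA B leB g \<and> (\<forall>a\<in>A. \<forall>s\<in>carrier S. g (actA a s) = g a)"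
  unfolding S_poset_map_def trivial_action_def by simp

lemma monotone_trivial_S_poset_map:
  assumes "monotone_map A leA B leB g"
  shows "S_poset_map S A leA trivial_action B leB trivial_action g"
  using assms unfolding S_poset_map_trivial_iff by (simp add: trivial_action_def)

lemma S_poset_act_mono:
  assumes "pogroup S leS" and "S_poset S leS C leC act"
    and "c \<in> C" and "d \<in> C" and "s \<in> carrier S" and "leC c d"
  shows "leC (act c s) (act d s)"
proof -
  have "leS s s" using assms(1,5) unfolding pogroup_def poset_def by blast
  then show ?thesis using assms(2-6) unfolding S_poset_def by blast
qed

lemma S_poset_act_inverse:
  assumes "pogroup S leS" and "S_poset S leS C leC act"
    and "c \<in> C" and "s \<in> carrier S"
  shows "act (act c s) (inv\<^bsub>S\<^esub> s) = c"
proof -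
  have grp: "group S" using assms(1) unfolding pogroup_def by blast
  have si: "inv\<^bsub>S\<^esub> s \<in> carrier S" by (rule group.inv_closed[OF grp assms(4)])
  have assoc: "act c (s \<otimes>\<^bsub>S\<^esub> inv\<^bsub>S\<^esub> s) = act (act c s) (inv\<^bsub>S\<^esub> s)"
    and unit: "act c \<one>\<^bsub>S\<^esub> = c"
    using assms(2-4) si unfolding S_poset_def by blast+
  have "s \<otimes>\<^bsub>S\<^esub> inv\<^bsub>S\<^esub> s = \<one>\<^bsub>S\<^esub>" by (rule group.r_inv[OF grp assms(4)])
  then show ?thesis using assoc unit by simp
qed

definition upper_image ::
  "('c \<Rightarrow> 'c \<Rightarrow> bool) \<Rightarrow> ('a \<Rightarrow> 'c) \<Rightarrow> ('a \<Rightarrow> 'x) \<Rightarrow> 'a set \<Rightarrow> 'c \<Rightarrow> 'x set"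
  where "upper_image leC h u A c = u ` {a \<in> A. leC c (h a)}"

lemma upper_image_antimono:
  assumes "poset C leC" and "c \<in> C" and "c' \<in> C" and "leC c c'"
    and "\<forall>a\<in>A. h a \<in> C"
  shows "upper_image leC h u A c' \<subseteq> upper_image leC h u A c"
  using assms unfolding upper_image_def poset_def by blast

lemma upper_image_act_subset:
  assumes pg: "pogroup S leS"
    and SA: "S_poset S leS A leA actA" and SC: "S_poset S leS C leC actC"
    and h: "S_poset_map S A leA actA C leC actC h"
    and u: "\<forall>a\<in>A. \<forall>s\<in>carrier S. u (actA a s) = u a"
    and c: "c \<in> C" and s: "s \<in> carrier S"
  shows "upper_image leC h u A c \<subseteq> upper_image leC h u A (actC c s)"
proof
  fix x assume "x \<in> upper_image leC h u A c"
  then obtain a where a: "a \<in> A" "leC c (h a)" and x: "x = u a"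
    unfolding upper_image_def by blast
  have as: "actA a s \<in> A" using SA a s unfolding S_poset_def by blast
  have "h a \<in> C" and "h (actA a s) = actC (h a) s"
    using h a s unfolding S_poset_map_def monotone_map_def by blast+
  then have "leC (actC c s) (h (actA a s))"
    using S_poset_act_mono[OF pg SC c _ s a(2)] by simp
  moreover have "x = u (actA a s)" using u a s x by simp
  ultimately show "x \<in> upper_image leC h u A (actC c s)"
    unfolding upper_image_def using as by blast
qed

text \<open>Hence, since the action of a group element can be undone, the upper image is
  constant on orbits; this is where the group structure of S is used.\<close>
lemma upper_image_act_invariant:
  assumes pg: "pogroup S leS"
    and SA: "S_poset S leS A leA actA" and SC: "S_poset S leS C leC actC"
    and h: "S_poset_map S A leA actA C leC actC h"
    and u: "\<forall>a\<in>A. \<forall>s\<in>carrier S. u (actA a s) = u a"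
    and c: "c \<in> C" and s: "s \<in> carrier S"
  shows "upper_image leC h u A (actC c s) = upper_image leC h u A c"
proof
  have si: "inv\<^bsub>S\<^esub> s \<in> carrier S"
    using pg s unfolding pogroup_def by (blast intro: group.inv_closed)
  have cs: "actC c s \<in> C" using SC c s unfolding S_poset_def by blast
  have "upper_image leC h u A (actC c s) \<subseteq> upper_image leC h u A (actC (actC c s) (inv\<^bsub>S\<^esub> s))"
    by (rule upper_image_act_subset[OF pg SA SC h u cs si])
  then show "upper_image leC h u A (actC c s) \<subseteq> upper_image leC h u A c"
    using S_poset_act_inverse[OF pg SC c s] by simp
  show "upper_image leC h u A c \<subseteq> upper_image leC h u A (actC c s)"
    by (rule upper_image_act_subset[OF pg SA SC h u c s])
qed

lemma topological_extension:
  assumes pg: "pogroup S leS"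
    and top: "topological_functor X leX B leB f"
    and SA: "S_poset S leS A leA actA" and SC: "S_poset S leS C leC actC"
    and k: "S_poset_map S C leC actC B leB trivial_action k"
    and h: "S_poset_map S A leA actA C leC actC h" and kh: "\<forall>a\<in>A. k (h a) = g a"
    and emb: "order_embedding A leA C leC h"
    and u: "S_poset_map S A leA actA X leX trivial_action u" and fu: "\<forall>a\<in>A. f (u a) = g a"
  shows "\<exists>v. S_poset_map S C leC actC X leX trivial_action v
           \<and> (\<forall>c\<in>C. f (v c) = k c) \<and> (\<forall>a\<in>A. v (h a) = u a)"
proof -
  let ?D = "upper_image leC h u A"
  let ?lift = "initial_lift X leX leB f"
  define v where "v c = (THE a. ?lift (?D c) (k c) a)" for c
  have hC: "\<forall>a\<in>A. h a \<in> C"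
    using h unfolding S_poset_map_def monotone_map_def by blast
  have kmono: "monotone_map C leC B leB k" and kact: "\<forall>c\<in>C. \<forall>s\<in>carrier S. k (actC c s) = k c"
    using k unfolding S_poset_map_trivial_iff by blast+
  have umono: "monotone_map A leA X leX u" and uact: "\<forall>a\<in>A. \<forall>s\<in>carrier S. u (actA a s) = u a"
    using u unfolding S_poset_map_trivial_iff by blast+
  have Cpos: "poset C leC" using SC unfolding S_poset_def by blast
  have D_in_X: "?D c \<subseteq> X" for c
    using umono unfolding monotone_map_def upper_image_def by blast
  have unique_lift: "\<exists>!a. ?lift (?D c) (k c) a" if c: "c \<in> C" for c
  proof (rule topological_unique_initial_lift[OF top])
    show "k c \<in> B" using kmono c unfolding monotone_map_def by blast
    show "?D c \<subseteq> X" by (rule D_in_X)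
    show "\<forall>d\<in>?D c. leB (k c) (f d)"
    proof (clarsimp simp: upper_image_def)
      fix a assume "a \<in> A" "leC c (h a)"
      then have "leB (k c) (k (h a))" using kmono c hC unfolding monotone_map_def by blast
      then show "leB (k c) (f (u a))" using kh fu \<open>a \<in> A\<close> by simp
    qed
  qed
  have v_lift: "?lift (?D c) (k c) (v c)" if "c \<in> C" for c
    unfolding v_def using theI'[OF unique_lift[OF that]] .
  have v_mono: "monotone_map C leC X leX v"
    unfolding monotone_map_def
  proof (intro conjI ballI impI)
    show "v c \<in> X" if "c \<in> C" for c using v_lift[OF that] unfolding initial_lift_def by blast
    show "leX (v c) (v c')" if c: "c \<in> C" and c': "c' \<in> C" and le: "leC c c'" for c c'
    proof (rule initial_lift_mono[OF v_lift[OF c] v_lift[OF c']])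
      show "?D c' \<subseteq> ?D c" by (rule upper_image_antimono[OF Cpos c c' le hC])
      show "leB (k c) (k c')" using kmono c c' le unfolding monotone_map_def by blast
    qed
  qed
  have v_act: "v (actC c s) = v c" if "c \<in> C" "s \<in> carrier S" for c s
  proof -
    have "?D (actC c s) = ?D c" by (rule upper_image_act_invariant[OF pg SA SC h uact that])
    moreover have "k (actC c s) = k c" using kact that by blast
    ultimately show ?thesis unfolding v_def by simp
  qed
  have v_extends: "v (h a) = u a" if a: "a \<in> A" for a
  proof -
    have reflects: "leC (h a) (h a') \<longleftrightarrow> leA a a'" if "a' \<in> A" for a'
      using emb a that unfolding order_embedding_def by blast
    have least: "\<forall>d\<in>?D (h a). leX (u a) d"
    proof (clarsimp simp: upper_image_def)
      fix a' assume "a' \<in> A" "leC (h a) (h a')"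
      then show "leX (u a) (u a')" using reflects umono a unfolding monotone_map_def by blast
    qed
    have "leA a a" using SA a unfolding S_poset_def poset_def by blast
    then have "u a \<in> ?D (h a)" using reflects a unfolding upper_image_def by blast
    moreover have "f (u a) = k (h a)" using fu kh a by simp
    ultimately have "?lift (?D (h a)) (k (h a)) (u a)"
      using least_element_initial_lift D_in_X least by metis
    then show ?thesis unfolding v_def by (rule the1_equality[OF unique_lift[OF hC[rule_format, OF a]]])
  qed
  have "S_poset_map S C leC actC X leX trivial_action v"
    unfolding S_poset_map_trivial_iff using v_mono v_act by blast
  moreover have "\<forall>c\<in>C. f (v c) = k c" using v_lift unfolding initial_lift_def by blast
  ultimately show ?thesis using v_extends by blast
qed

theorem mainTheorem9:
  fixes S :: "('s, 'm) monoid_scheme" and leS :: "'s \<Rightarrow> 's \<Rightarrow> bool"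
    and X :: "'x set" and leX :: "'x \<Rightarrow> 'x \<Rightarrow> bool"
    and B :: "'b set" and leB :: "'b \<Rightarrow> 'b \<Rightarrow> bool"
    and f :: "'x \<Rightarrow> 'b"
  assumes "pogroup S leS"
    and "poset X leX" and "poset B leB"
    and "topological_functor X leX B leB f"
  shows "S_poset S leS X leX trivial_action \<and> S_poset S leS B leB trivial_action
    \<and> S_poset_map S X leX trivial_action B leB trivial_action f
    \<and> (\<forall>(A :: 'a set) leA actA (C :: 'c set) leC actC g k h u.
         S_poset S leS A leA actA \<and> S_poset S leS C leC actC
         \<and> S_poset_map S A leA actA B leB trivial_action g
         \<and> S_poset_map S C leC actC B leB trivial_action k
         \<and> S_poset_map S A leA actA C leC actC h \<and> (\<forall>a\<in>A. k (h a) = g a)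
         \<and> order_embedding A leA C leC h
         \<and> S_poset_map S A leA actA X leX trivial_action u \<and> (\<forall>a\<in>A. f (u a) = g a)
         \<longrightarrow> (\<exists>v. S_poset_map S C leC actC X leX trivial_action v
                 \<and> (\<forall>c\<in>C. f (v c) = k c) \<and> (\<forall>a\<in>A. v (h a) = u a)))"
proof (intro conjI allI impI)
  show "S_poset S leS X leX trivial_action"
    using assms(2) by (rule poset_trivial_S_poset)
  show "S_poset S leS B leB trivial_action"
    using assms(3) by (rule poset_trivial_S_poset)
  show "S_poset_map S X leX trivial_action B leB trivial_action f"
    using assms(4) unfolding topological_functor_def by (simp add: monotone_trivial_S_poset_map)
next
  fix A :: "'a set" and leA actA and C :: "'c set" and leC actC g k h u
  assume "S_poset S leS A leA actA \<and> S_poset S leS C leC actC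
         \<and> S_poset_map S A leA actA B leB trivial_action g
         \<and> S_poset_map S C leC actC B leB trivial_action k
         \<and> S_poset_map S A leA actA C leC actC h \<and> (\<forall>a\<in>A. k (h a) = g a)
         \<and> order_embedding A leA C leC h
         \<and> S_poset_map S A leA actA X leX trivial_action u \<and> (\<forall>a\<in>A. f (u a) = g a)"
  then show "\<exists>v. S_poset_map S C leC actC X leX trivial_action v
                 \<and> (\<forall>c\<in>C. f (v c) = k c) \<and> (\<forall>a\<in>A. v (h a) = u a)"
    using topological_extension[OF assms(1,4)] by blast
qed

end
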